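(* Let $d\ge 2$. For the Gilbert--Steiner problem in $\mathbb{R}^d$ with cost $c(x)=x^{1/2}$, every branching point of every solution has degree at most $d+1$.
   Context: Let $\mu^+,\mu^-$ be finite measures on $\mathbb{R}^d$ with finite supports and equal total mass. A $(\mu^+,\mu^-)$-flow consists of a finite vertex set $V\subset\mathbb{R}^d$ containing the support of $\mu^+-\mu^-$, a finite set $E$ of unordered pairs $\{x,y\}\subset V$, and non-zero reals $m(x,y)=-m(y,x)$ on edges such that $\mu^+-\mu^-=\sum_{\{x,y\}\in E} m(x,y)(\delta_y-\delta_x)$. The Gilbert functional is $\sum_{\{x,y\}\in E}c(|m(x,y)|)\,|x-y|$; a solution is a flow minimizing it. Branching points are vertices not in $\operatorname{supp}\mu^+\cup\operatorname{supp}\mu^-$. *)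

theory Defs
  imports "HOL-Analysis.Analysis"
begin

text \<open>A finite measure on a space with finite support is represented by its mass
function (nonnegative, finitely supported).\<close>

definition fin_supp_measure :: "('a \<Rightarrow> real) \<Rightarrow> bool" where
  "fin_supp_measure \<mu> \<longleftrightarrow> (\<forall>x. \<mu> x \<ge> 0) \<and> finite {x. \<mu> x \<noteq> 0}"

definition supp :: "('a \<Rightarrow> real) \<Rightarrow> 'a set" where
  "supp \<mu> = {x. \<mu> x \<noteq> 0}"

definition total_mass :: "('a \<Rightarrow> real) \<Rightarrow> real" where
  "total_mass \<mu> = (\<Sum>x\<in>supp \<mu>. \<mu> x)"

definition dirac :: "'a \<Rightarrow> 'a \<Rightarrow> real" where
  "dirac x = (\<lambda>z. if z = x then 1 else 0)"

definition edge_ends :: "'a set \<Rightarrow> 'a \<times> 'a" where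
  "edge_ends e = (SOME p. fst p \<noteq> snd p \<and> e = {fst p, snd p})"

text \<open>The signed measure m(x,y)(\<delta>_y - \<delta>_x) attached to an edge {x,y}; independent of
the orientation chosen, by antisymmetry of m.\<close>
definition edge_measure :: "('a \<Rightarrow> 'a \<Rightarrow> real) \<Rightarrow> 'a set \<Rightarrow> 'a \<Rightarrow> real" where
  "edge_measure m e = (case edge_ends e of (x, y) \<Rightarrow> (\<lambda>z. m x y * (dirac y z - dirac x z)))"

definition is_flow ::
  "('a::metric_space \<Rightarrow> real) \<Rightarrow> ('a \<Rightarrow> real) \<Rightarrow> 'a set \<Rightarrow> 'a set set \<Rightarrow> ('a \<Rightarrow> 'a \<Rightarrow> real) \<Rightarrow> bool" where
  "is_flow \<mu>p \<mu>m V E m \<longleftrightarrow>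
     finite V \<and> supp (\<lambda>z. \<mu>p z - \<mu>m z) \<subseteq> V \<and>
     finite E \<and> (\<forall>e\<in>E. \<exists>x y. x \<in> V \<and> y \<in> V \<and> x \<noteq> y \<and> e = {x, y}) \<and>
     (\<forall>x y. {x, y} \<in> E \<longrightarrow> m x y = - m y x \<and> m x y \<noteq> 0) \<and>
     (\<forall>z. \<mu>p z - \<mu>m z = (\<Sum>e\<in>E. edge_measure m e z))"

definition gilbert :: "(real \<Rightarrow> real) \<Rightarrow> 'a::metric_space set set \<Rightarrow> ('a \<Rightarrow> 'a \<Rightarrow> real) \<Rightarrow> real" where
  "gilbert c E m = (\<Sum>e\<in>E. case edge_ends e of (x, y) \<Rightarrow> c \<bar>m x y\<bar> * dist x y)"

definition is_solution ::
  "(real \<Rightarrow> real) \<Rightarrow> ('a::metric_space \<Rightarrow> real) \<Rightarrow> ('a \<Rightarrow> real) \<Rightarrow> 'a set \<Rightarrow> 'a set set \<Rightarrow> ('a \<Rightarrow> 'a \<Rightarrow> real) \<Rightarrow> bool" where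
  "is_solution c \<mu>p \<mu>m V E m \<longleftrightarrow> is_flow \<mu>p \<mu>m V E m \<and>
     (\<forall>V' E' m'. is_flow \<mu>p \<mu>m V' E' m' \<longrightarrow> gilbert c E m \<le> gilbert c E' m')"

definition branching_point :: "('a \<Rightarrow> real) \<Rightarrow> ('a \<Rightarrow> real) \<Rightarrow> 'a set \<Rightarrow> 'a \<Rightarrow> bool" where
  "branching_point \<mu>p \<mu>m V v \<longleftrightarrow> v \<in> V \<and> v \<notin> supp \<mu>p \<union> supp \<mu>m"

definition degree :: "'a set set \<Rightarrow> 'a \<Rightarrow> nat" where
  "degree E v = card {e\<in>E. v \<in> e}"

end

(*
  At a branching point v every edge {v, w} carries a nonzero flux s_w = m v w, and Kirchhoff's law
  gives sum_w s_w = 0, so fluxes of both signs occur. Rerouting two edges {v, i}, {v, j} through a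
  new vertex p = v + q, joined to v by an edge carrying s_i + s_j, gives a competitor, and the first
  variation of its cost at q = 0 yields |u_i + u_j| <= sqrt |s_i + s_j| for the vectors
  u_w = sqrt |s_w| (w - v) / |w - v|. Since |u_w|^2 = |s_w|, this says <u_i, u_j> <= 0, strictly
  when s_i and s_j have opposite signs. For such a family of vectors the positive part of a linear
  relation is orthogonal to the rest, which forces every proper subfamily to be linearly
  independent; so there are at most d + 1 of them.
*)

theory Submission
  imports Defs
begin

section \<open>Tangent bound and first variation\<close>

lemma norm_diff_le_tangent:
  fixes y h :: "'a::real_inner"
  assumes "y \<noteq> 0"
  shows "norm (y - h) \<le> norm y - inner y h / norm y + (norm h)\<^sup>2 / (2 * norm y)"
proof -
  have "2 * norm y * norm (y - h) \<le> (norm y)\<^sup>2 + (norm (y - h))\<^sup>2"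
    by (rule sum_squares_bound)
  also have "(norm (y - h))\<^sup>2 = (norm y)\<^sup>2 - 2 * inner y h + (norm h)\<^sup>2"
    using dot_norm_neg[of y h] by simp
  finally have "2 * norm y * norm (y - h) \<le> 2 * (norm y)\<^sup>2 - 2 * inner y h + (norm h)\<^sup>2"
    by simp
  with assms show ?thesis
    by (simp add: field_simps power2_eq_square)
qed

lemma first_variation_le:
  fixes y1 y2 h :: "'a::real_inner"
  assumes "y1 \<noteq> 0" and "y2 \<noteq> 0" and "A1 \<ge> 0" and "A2 \<ge> 0" and "finite S"
    and min: "\<And>q. q \<notin> S \<Longrightarrow>
      A1 * norm y1 + A2 * norm y2 \<le> A1 * norm (y1 - q) + A2 * norm (y2 - q) + C * norm q"
  shows "inner ((A1 / norm y1) *\<^sub>R y1 + (A2 / norm y2) *\<^sub>R y2) h \<le> C * norm h"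
proof (cases "h = 0")
  case False
  define u where "u = (A1 / norm y1) *\<^sub>R y1 + (A2 / norm y2) *\<^sub>R y2"
  define K where "K = A1 * (norm h)\<^sup>2 / (2 * norm y1) + A2 * (norm h)\<^sup>2 / (2 * norm y2)"
  have le: "inner u h \<le> C * norm h + t * K" if "t > 0" and "t *\<^sub>R h \<notin> S" for t
  proof -
    have "A1 * norm (y1 - t *\<^sub>R h)
        \<le> A1 * (norm y1 - t * inner y1 h / norm y1 + t\<^sup>2 * (norm h)\<^sup>2 / (2 * norm y1))"
      using norm_diff_le_tangent[OF \<open>y1 \<noteq> 0\<close>, of "t *\<^sub>R h"] \<open>A1 \<ge> 0\<close> \<open>t > 0\<close>
      by (intro mult_left_mono) (simp_all add: power_mult_distrib)
    moreover have "A2 * norm (y2 - t *\<^sub>R h)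
        \<le> A2 * (norm y2 - t * inner y2 h / norm y2 + t\<^sup>2 * (norm h)\<^sup>2 / (2 * norm y2))"
      using norm_diff_le_tangent[OF \<open>y2 \<noteq> 0\<close>, of "t *\<^sub>R h"] \<open>A2 \<ge> 0\<close> \<open>t > 0\<close>
      by (intro mult_left_mono) (simp_all add: power_mult_distrib)
    ultimately have "t * inner u h \<le> t * (C * norm h + t * K)"
      using min[OF \<open>t *\<^sub>R h \<notin> S\<close>] \<open>t > 0\<close>
      by (simp add: u_def K_def inner_add_left algebra_simps power2_eq_square)
    with \<open>t > 0\<close> show ?thesis
      by simp
  qed
  have "finite ((\<lambda>t. t *\<^sub>R h) -` S)"
    using \<open>finite S\<close> False by (intro finite_vimageI) (auto simp: inj_on_def)
  then have "\<forall>\<^sub>F t in at_right 0. t \<notin> (\<lambda>t. t *\<^sub>R h) -` S"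
    by (intro eventually_ball_finite[THEN eventually_mono]) (auto intro: eventually_neq_at_within)
  then have "\<forall>\<^sub>F t in at_right 0. inner u h \<le> C * norm h + t * K"
    using eventually_at_right_less[of 0] by eventually_elim (auto intro: le)
  moreover have "((\<lambda>t. C * norm h + t * K) \<longlongrightarrow> C * norm h) (at_right 0)"
    by (auto intro!: tendsto_eq_intros)
  ultimately show ?thesis
    unfolding u_def[symmetric] by (intro tendsto_le[OF _ _ tendsto_const]) auto
qed simp

lemma first_variation_norm_le:
  fixes y1 y2 :: "'a::real_inner"
  assumes "y1 \<noteq> 0" and "y2 \<noteq> 0" and "A1 \<ge> 0" and "A2 \<ge> 0" and "finite S"
    and min: "\<And>q. q \<notin> S \<Longrightarrow>
      A1 * norm y1 + A2 * norm y2 \<le> A1 * norm (y1 - q) + A2 * norm (y2 - q) + C * norm q"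
  shows "norm ((A1 / norm y1) *\<^sub>R y1 + (A2 / norm y2) *\<^sub>R y2) \<le> C"
proof -
  define u where "u = (A1 / norm y1) *\<^sub>R y1 + (A2 / norm y2) *\<^sub>R y2"
  note variation = first_variation_le[OF assms, folded u_def]
  show ?thesis
  proof (cases "u = 0")
    case True
    have "0 \<le> C * norm y1"
      using variation[of y1] True by simp
    with \<open>y1 \<noteq> 0\<close> True show ?thesis
      by (simp add: u_def zero_le_mult_iff)
  next
    case False
    have "norm u * norm u \<le> C * norm u"
      using variation[of u] by (simp add: power2_norm_eq_inner[symmetric] power2_eq_square)
    with False show ?thesis
      unfolding u_def[symmetric] by simp
  qed
qed

section \<open>Families of vectors with pairwise obtuse angles\<close>

lemma obtuse_relation_positive_part_eq_0:
  fixes x :: "'b \<Rightarrow> 'a::real_inner"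
  assumes "finite N" and obtuse: "\<And>i j. i \<in> N \<Longrightarrow> j \<in> N \<Longrightarrow> i \<noteq> j \<Longrightarrow> inner (x i) (x j) \<le> 0"
    and rel: "(\<Sum>i\<in>N. c i *\<^sub>R x i) = 0"
  shows "(\<Sum>i\<in>{i\<in>N. c i > 0}. c i *\<^sub>R x i) = 0"
proof -
  define P where "P = {i\<in>N. c i > 0}"
  define y where "y = (\<Sum>i\<in>P. c i *\<^sub>R x i)"
  have "(\<Sum>i\<in>N. c i *\<^sub>R x i) = y + (\<Sum>j\<in>N - P. c j *\<^sub>R x j)"
    unfolding y_def P_def using \<open>finite N\<close> by (subst sum.subset_diff[of P]) (auto simp: P_def)
  with rel have y': "y = (\<Sum>j\<in>N - P. (- c j) *\<^sub>R x j)"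
    by (simp add: sum_negf eq_neg_iff_add_eq_0)
  have "inner y y = inner (\<Sum>i\<in>P. c i *\<^sub>R x i) (\<Sum>j\<in>N - P. (- c j) *\<^sub>R x j)"
    by (subst (2) y') (simp add: y_def)
  also have "\<dots> = (\<Sum>i\<in>P. \<Sum>j\<in>N - P. (c i * - c j) * inner (x i) (x j))"
    by (simp add: inner_sum_left) (simp add: inner_sum_right sum_distrib_left mult_ac)
  also have "\<dots> \<le> 0"
  proof (intro sum_nonpos mult_nonneg_nonpos)
    fix i j assume "i \<in> P" "j \<in> N - P"
    then show "0 \<le> c i * - c j" and "inner (x i) (x j) \<le> 0"
      using obtuse by (auto simp: P_def mult_le_0_iff)
  qed
  finally show ?thesis
    by (simp add: y_def P_def flip: not_less)
qed

lemma obtuse_relation_orthogonal: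
  fixes x :: "'b \<Rightarrow> 'a::real_inner"
  assumes "finite N" and obtuse: "\<And>i j. i \<in> N \<Longrightarrow> j \<in> N \<Longrightarrow> i \<noteq> j \<Longrightarrow> inner (x i) (x j) \<le> 0"
    and rel: "(\<Sum>i\<in>N. c i *\<^sub>R x i) = 0"
    and "a \<in> N" "c a > 0" "j \<in> N" "c j \<le> 0"
  shows "inner (x a) (x j) = 0"
proof -
  define P where "P = {i\<in>N. c i > 0}"
  have "(\<Sum>i\<in>P. c i * inner (x i) (x j)) = inner (\<Sum>i\<in>P. c i *\<^sub>R x i) (x j)"
    by (simp add: inner_sum_left)
  also have "\<dots> = 0"
    using obtuse_relation_positive_part_eq_0[OF assms(1-3)] by (simp add: P_def)
  finally have "(\<Sum>i\<in>P. - (c i * inner (x i) (x j))) = 0"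
    by (simp add: sum_negf)
  moreover have "\<forall>i\<in>P. 0 \<le> - (c i * inner (x i) (x j))"
    using obtuse \<open>j \<in> N\<close> \<open>c j \<le> 0\<close> by (force simp: P_def mult_nonneg_nonpos)
  moreover have "finite P"
    using \<open>finite N\<close> by (simp add: P_def)
  ultimately have "\<forall>i\<in>P. - (c i * inner (x i) (x j)) = 0"
    using sum_nonneg_eq_0_iff[of P "\<lambda>i. - (c i * inner (x i) (x j))"] by blast
  then have "c a * inner (x a) (x j) = 0"
    using assms(4,5) by (simp add: P_def)
  with \<open>c a > 0\<close> show ?thesis
    by simp
qed

lemma obtuse_relation_nonpos:
  fixes x :: "'b \<Rightarrow> 'a::real_inner"
  assumes "finite N" and obtuse: "\<And>i j. i \<in> N \<Longrightarrow> j \<in> N \<Longrightarrow> i \<noteq> j \<Longrightarrow> inner (x i) (x j) \<le> 0"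
    and strict: "\<And>i j. i \<in> N \<Longrightarrow> j \<in> N \<Longrightarrow> pos i \<Longrightarrow> \<not> pos j \<Longrightarrow> inner (x i) (x j) < 0"
    and "\<exists>i\<in>N. pos i" and "\<exists>j\<in>N. \<not> pos j"
    and rel: "(\<Sum>i\<in>N. c i *\<^sub>R x i) = 0" and "w \<in> N" and "c w \<le> 0"
  shows "\<forall>i\<in>N. c i \<le> 0"
proof (rule ccontr)
  \<comment> \<open>A positive coefficient \<open>c a\<close> forces every element of \<open>N\<close> into the class of \<open>a\<close>.\<close>
  assume "\<not> (\<forall>i\<in>N. c i \<le> 0)"
  then obtain a where a: "a \<in> N" "c a > 0"
    by (auto simp: not_le)
  have same_side: "pos j = pos a" if "j \<in> N" "c j \<le> 0" for j
    using obtuse_relation_orthogonal[OF assms(1,2) rel a that] strict[of a j] strict[of j a] a that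
    by (auto simp: inner_commute)
  have "pos i = pos a" if "i \<in> N" for i
  proof (cases "c i \<le> 0")
    case False
    then have "pos w = pos i"
      using obtuse_relation_orthogonal[OF assms(1,2) rel that _ \<open>w \<in> N\<close> \<open>c w \<le> 0\<close>]
        strict[of i w] strict[of w i] that \<open>w \<in> N\<close>
      by (auto simp: inner_commute)
    with same_side[OF \<open>w \<in> N\<close> \<open>c w \<le> 0\<close>] show ?thesis
      by simp
  qed (use same_side that in blast)
  with \<open>\<exists>i\<in>N. pos i\<close> \<open>\<exists>j\<in>N. \<not> pos j\<close> show False
    by blast
qed

lemma obtuse_family_inj_on:
  fixes x :: "'b \<Rightarrow> 'a::real_inner"
  assumes obtuse: "\<And>i j. i \<in> N \<Longrightarrow> j \<in> N \<Longrightarrow> i \<noteq> j \<Longrightarrow> inner (x i) (x j) \<le> 0"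
    and strict: "\<And>i j. i \<in> N \<Longrightarrow> j \<in> N \<Longrightarrow> pos i \<Longrightarrow> \<not> pos j \<Longrightarrow> inner (x i) (x j) < 0"
    and sides: "\<exists>i\<in>N. pos i" "\<exists>j\<in>N. \<not> pos j"
  shows "inj_on x N"
proof (rule inj_onI, rule ccontr)
  fix i j assume "i \<in> N" "j \<in> N" "x i = x j" "i \<noteq> j"
  then have "inner (x i) (x i) \<le> 0"
    using obtuse[of i j] by simp
  then have "x i = 0"
    by (metis inner_gt_zero_iff not_le)
  from sides obtain k where "k \<in> N" "pos k \<noteq> pos i"
    by (cases "pos i") auto
  then have "inner (x i) (x k) < 0 \<or> inner (x k) (x i) < 0"
    using strict[of i k] strict[of k i] \<open>i \<in> N\<close> by (cases "pos i") auto
  with \<open>x i = 0\<close> show False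
    by auto
qed

lemma card_obtuse_family_le:
  fixes x :: "'b \<Rightarrow> 'a::euclidean_space"
  assumes "finite N" and obtuse: "\<And>i j. i \<in> N \<Longrightarrow> j \<in> N \<Longrightarrow> i \<noteq> j \<Longrightarrow> inner (x i) (x j) \<le> 0"
    and strict: "\<And>i j. i \<in> N \<Longrightarrow> j \<in> N \<Longrightarrow> pos i \<Longrightarrow> \<not> pos j \<Longrightarrow> inner (x i) (x j) < 0"
    and sides: "\<exists>i\<in>N. pos i" "\<exists>j\<in>N. \<not> pos j"
  shows "card N \<le> DIM('a) + 1"
proof -
  obtain w where "w \<in> N"
    using sides by blast
  have inj: "inj_on x (N - {w})"
    using obtuse_family_inj_on[OF obtuse strict sides] by (rule inj_on_subset) auto
  have "independent (x ` (N - {w}))"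
  proof
    assume "dependent (x ` (N - {w}))"
    then obtain u where u: "(\<Sum>v\<in>x ` (N - {w}). u v *\<^sub>R v) = 0" "\<exists>v\<in>x ` (N - {w}). u v \<noteq> 0"
      using dependent_finite[of "x ` (N - {w})"] \<open>finite N\<close> by auto
    define c where "c i = (if i = w then 0 else u (x i))" for i
    have "(\<Sum>i\<in>N. c i *\<^sub>R x i) = (\<Sum>i\<in>N - {w}. u (x i) *\<^sub>R x i)"
      using \<open>finite N\<close> \<open>w \<in> N\<close> by (simp add: c_def sum.remove)
    also have "\<dots> = 0"
      using u(1) by (simp add: sum.reindex[OF inj])
    finally have rel: "(\<Sum>i\<in>N. c i *\<^sub>R x i) = 0" .
    then have rel': "(\<Sum>i\<in>N. (- c i) *\<^sub>R x i) = 0"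
      by (simp add: sum_negf)
    have "c w \<le> 0" "- c w \<le> 0"
      by (simp_all add: c_def)
    then have zero: "\<forall>i\<in>N. c i \<le> 0 \<and> - c i \<le> 0"
      using obtuse_relation_nonpos[OF \<open>finite N\<close> obtuse strict sides rel \<open>w \<in> N\<close>]
        obtuse_relation_nonpos[OF \<open>finite N\<close> obtuse strict sides rel' \<open>w \<in> N\<close>] by blast
    from u(2) obtain i where "i \<in> N - {w}" "u (x i) \<noteq> 0"
      by blast
    with zero show False
      by (auto simp: c_def)
  qed
  then have "card (x ` (N - {w})) \<le> DIM('a)"
    by (rule independent_card_le)
  with card_image[OF inj] \<open>finite N\<close> \<open>w \<in> N\<close> show ?thesis
    by simp
qed

definition edge_cost :: "(real \<Rightarrow> real) \<Rightarrow> ('a::metric_space \<Rightarrow> 'a \<Rightarrow> real) \<Rightarrow> 'a set \<Rightarrow> real" where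
  "edge_cost c m e = (case edge_ends e of (x, y) \<Rightarrow> c \<bar>m x y\<bar> * dist x y)"

lemma gilbert_eq_sum_edge_cost: "gilbert c E m = (\<Sum>e\<in>E. edge_cost c m e)"
  by (simp add: gilbert_def edge_cost_def)

lemma edge_ends_doubleton:
  assumes "x \<noteq> y"
  shows "edge_ends {x, y} = (x, y) \<or> edge_ends {x, y} = (y, x)"
proof -
  have "fst (edge_ends {x, y}) \<noteq> snd (edge_ends {x, y}) \<and> {x, y} = {fst (edge_ends {x, y}), snd (edge_ends {x, y})}"
    unfolding edge_ends_def by (rule someI[of _ "(x, y)"]) (use assms in simp)
  then show ?thesis
    by (cases "edge_ends {x, y}") (auto simp: doubleton_eq_iff)
qed

lemma edge_measure_doubleton:
  assumes "x \<noteq> y" and "m y x = - m x y"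
  shows "edge_measure m {x, y} = (\<lambda>z. m x y * (dirac y z - dirac x z))"
  using edge_ends_doubleton[OF assms(1)] assms(2)
  by (auto simp: edge_measure_def algebra_simps)

lemma edge_cost_doubleton:
  assumes "x \<noteq> y" and "m y x = - m x y"
  shows "edge_cost c m {x, y} = c \<bar>m x y\<bar> * dist x y"
  using edge_ends_doubleton[OF assms(1)] assms(2)
  by (auto simp: edge_cost_def dist_commute)

lemma edge_measure_cong:
  assumes "x \<noteq> y" and "m' x y = m x y" and "m' y x = m y x"
  shows "edge_measure m' {x, y} = edge_measure m {x, y}"
  using edge_ends_doubleton[OF assms(1)] assms(2,3) by (auto simp: edge_measure_def)

lemma edge_cost_cong:
  assumes "x \<noteq> y" and "m' x y = m x y" and "m' y x = m y x"
  shows "edge_cost c m' {x, y} = edge_cost c m {x, y}"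
  using edge_ends_doubleton[OF assms(1)] assms(2,3) by (auto simp: edge_cost_def)

lemma flow_edgeE:
  assumes "is_flow \<mu>p \<mu>m V E m" and "e \<in> E"
  obtains x y where "x \<in> V" "y \<in> V" "x \<noteq> y" "e = {x, y}"
  using assms unfolding is_flow_def by blast

lemma flow_edge_subset:
  assumes "is_flow \<mu>p \<mu>m V E m" and "e \<in> E"
  shows "e \<subseteq> V"
  using assms by (elim flow_edgeE) auto

lemma flow_edge_neq:
  assumes "is_flow \<mu>p \<mu>m V E m" and "{x, y} \<in> E"
  shows "x \<noteq> y"
  using assms by (elim flow_edgeE) (auto simp: doubleton_eq_iff)

lemma flow_flux:
  assumes "is_flow \<mu>p \<mu>m V E m" and "{x, y} \<in> E"
  shows "m y x = - m x y" and "m x y \<noteq> 0"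
  using assms unfolding is_flow_def by force+

definition neighbours :: "'a set set \<Rightarrow> 'a \<Rightarrow> 'a set" where
  "neighbours E v = {w. {v, w} \<in> E}"

lemma edges_at_eq_image_neighbours:
  assumes "is_flow \<mu>p \<mu>m V E m"
  shows "{e\<in>E. v \<in> e} = (\<lambda>w. {v, w}) ` neighbours E v"
proof (intro subset_antisym subsetI)
  fix e assume "e \<in> {e\<in>E. v \<in> e}"
  then have "e \<in> E" "v \<in> e" by auto
  with assms obtain x y where "e = {x, y}" by (elim flow_edgeE)
  with \<open>v \<in> e\<close> have "e = {v, if x = v then y else x}" by auto
  with \<open>e \<in> E\<close> show "e \<in> (\<lambda>w. {v, w}) ` neighbours E v"
    unfolding neighbours_def by blast
qed (auto simp: neighbours_def)

lemma degree_eq_card_neighbours: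
  assumes "is_flow \<mu>p \<mu>m V E m"
  shows "degree E v = card (neighbours E v)"
proof -
  have "inj_on (\<lambda>w. {v, w}) (neighbours E v)"
    by (rule inj_onI) (auto simp: doubleton_eq_iff)
  then show ?thesis
    unfolding degree_def edges_at_eq_image_neighbours[OF assms] by (rule card_image)
qed

lemma finite_neighbours:
  assumes "is_flow \<mu>p \<mu>m V E m"
  shows "finite (neighbours E v)"
proof -
  have "neighbours E v \<subseteq> V"
    using flow_edge_subset[OF assms] by (auto simp: neighbours_def)
  with assms show ?thesis
    unfolding is_flow_def by (auto intro: finite_subset)
qed

lemma flow_sum_flux_neighbours:
  assumes flow: "is_flow \<mu>p \<mu>m V E m"
  shows "(\<Sum>w\<in>neighbours E v. m v w) = \<mu>m v - \<mu>p v"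
proof -
  have "\<mu>p v - \<mu>m v = (\<Sum>e\<in>E. edge_measure m e v)"
    using flow unfolding is_flow_def by blast
  also have "\<dots> = (\<Sum>e\<in>{e\<in>E. v \<in> e}. edge_measure m e v)"
  proof (rule sum.mono_neutral_right)
    show "\<forall>e\<in>E - {e\<in>E. v \<in> e}. edge_measure m e v = 0"
    proof
      fix e assume e: "e \<in> E - {e\<in>E. v \<in> e}"
      with flow obtain x y where "x \<noteq> y" "e = {x, y}" by (elim flow_edgeE) auto
      with e flow show "edge_measure m e v = 0"
        by (auto simp: edge_measure_doubleton flow_flux dirac_def)
    qed
  qed (use flow in \<open>auto simp: is_flow_def\<close>)
  also have "\<dots> = (\<Sum>w\<in>neighbours E v. edge_measure m {v, w} v)"
    unfolding edges_at_eq_image_neighbours[OF flow]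
    by (rule sum.reindex_cong[where l = "\<lambda>w. {v, w}"]) (auto intro: inj_onI simp: doubleton_eq_iff)
  also have "\<dots> = (\<Sum>w\<in>neighbours E v. - m v w)"
    by (rule sum.cong) (auto simp: neighbours_def edge_measure_doubleton flow_flux[OF flow]
        flow_edge_neq[OF flow] dirac_def)
  finally show ?thesis
    by (simp add: sum_negf)
qed

lemma balanced_vertex_flux_signs:
  assumes flow: "is_flow \<mu>p \<mu>m V E m" and "\<mu>p v = \<mu>m v" and ne: "neighbours E v \<noteq> {}"
  shows "\<exists>i\<in>neighbours E v. m v i > 0" and "\<exists>j\<in>neighbours E v. m v j < 0"
proof -
  let ?N = "neighbours E v"
  have sum: "(\<Sum>w\<in>?N. m v w) = 0"
    using flow_sum_flux_neighbours[OF flow, of v] \<open>\<mu>p v = \<mu>m v\<close> by simp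
  have nonzero: "m v w \<noteq> 0" if "w \<in> ?N" for w
    using flow_flux(2)[OF flow] that by (simp add: neighbours_def)
  note fin = finite_neighbours[OF flow, of v]
  show "\<exists>i\<in>?N. m v i > 0"
  proof (rule ccontr)
    assume "\<not> (\<exists>i\<in>?N. m v i > 0)"
    with nonzero have "\<And>w. w \<in> ?N \<Longrightarrow> - m v w > 0"
      by (meson linorder_neqE_linordered_idom neg_0_less_iff_less)
    then have "(\<Sum>w\<in>?N. - m v w) > 0"
      by (rule sum_pos[OF fin ne])
    with sum show False
      by (simp add: sum_negf)
  qed
  show "\<exists>j\<in>?N. m v j < 0"
  proof (rule ccontr)
    assume "\<not> (\<exists>j\<in>?N. m v j < 0)"
    with nonzero have "\<And>w. w \<in> ?N \<Longrightarrow> m v w > 0"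
      by (meson linorder_neqE_linordered_idom)
    then have "(\<Sum>w\<in>?N. m v w) > 0"
      by (rule sum_pos[OF fin ne])
    with sum show False
      by simp
  qed
qed

section \<open>Rerouting two edges through a new vertex\<close>

text \<open>The edge \<open>{v, p}\<close> is omitted when it would carry zero flux, which flows do not allow.\<close>

definition rerouted_edges :: "'a set set \<Rightarrow> ('a \<Rightarrow> 'a \<Rightarrow> real) \<Rightarrow> 'a \<Rightarrow> 'a \<Rightarrow> 'a \<Rightarrow> 'a \<Rightarrow> 'a set set" where
  "rerouted_edges E m v w1 w2 p =
     (E - {{v, w1}, {v, w2}}) \<union> {{p, w1}, {p, w2}} \<union> (if m v w1 + m v w2 = 0 then {} else {{v, p}})"

definition rerouted_flux :: "('a \<Rightarrow> 'a \<Rightarrow> real) \<Rightarrow> 'a \<Rightarrow> 'a \<Rightarrow> 'a \<Rightarrow> 'a \<Rightarrow> 'a \<Rightarrow> 'a \<Rightarrow> real" where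
  "rerouted_flux m v w1 w2 p =
     (let out = (\<lambda>z. if z = w1 then m v w1 else if z = w2 then m v w2
                     else if z = v then - (m v w1 + m v w2) else 0)
      in (\<lambda>x y. if x = p then out y else if y = p then - out x else m x y))"

lemma rerouted_flux_away:
  assumes "x \<noteq> p" and "y \<noteq> p"
  shows "rerouted_flux m v w1 w2 p x y = m x y"
  using assms by (simp add: rerouted_flux_def)

lemma rerouted_flux_at:
  assumes "p \<notin> {v, w1, w2}" and "v \<noteq> w1" and "v \<noteq> w2" and "w1 \<noteq> w2"
  shows "rerouted_flux m v w1 w2 p p w1 = m v w1" and "rerouted_flux m v w1 w2 p w1 p = - m v w1"
    and "rerouted_flux m v w1 w2 p p w2 = m v w2" and "rerouted_flux m v w1 w2 p w2 p = - m v w2"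
    and "rerouted_flux m v w1 w2 p v p = m v w1 + m v w2"
    and "rerouted_flux m v w1 w2 p p v = - (m v w1 + m v w2)"
  using assms by (auto simp: rerouted_flux_def Let_def)

lemma rerouted_edgesE:
  assumes "e \<in> rerouted_edges E m v w1 w2 p"
  obtains "e \<in> E" | "e = {p, w1}" | "e = {p, w2}" | "m v w1 + m v w2 \<noteq> 0" "e = {v, p}"
  using assms by (auto simp: rerouted_edges_def split: if_splits)

lemma sum_rerouted_edges:
  fixes f :: "'a set \<Rightarrow> 'b::comm_monoid_add"
  assumes "finite E" and E: "{v, w1} \<in> E" "{v, w2} \<in> E"
    and "w1 \<noteq> w2" and "v \<noteq> w1" and "v \<noteq> w2" and p: "p \<notin> \<Union>E"
  shows "(\<Sum>e\<in>rerouted_edges E m v w1 w2 p. f e) + f {v, w1} + f {v, w2}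
       = (\<Sum>e\<in>E. f e) + f {p, w1} + f {p, w2} + (if m v w1 + m v w2 = 0 then 0 else f {v, p})"
proof -
  define E0 where "E0 = E - {{v, w1}, {v, w2}}"
  define new where "new = {{p, w1}, {p, w2}} \<union> (if m v w1 + m v w2 = 0 then {} else {{v, p}})"
  have "p \<noteq> v" "p \<noteq> w1" "p \<noteq> w2"
    using p E by auto
  have "(\<Sum>e\<in>E. f e) = (\<Sum>e\<in>E0. f e) + (\<Sum>e\<in>{{v, w1}, {v, w2}}. f e)"
    unfolding E0_def using E \<open>finite E\<close> by (intro sum.subset_diff) auto
  also have "(\<Sum>e\<in>{{v, w1}, {v, w2}}. f e) = f {v, w1} + f {v, w2}"
    using \<open>w1 \<noteq> w2\<close> by (simp add: doubleton_eq_iff)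
  finally have old: "(\<Sum>e\<in>E. f e) = (\<Sum>e\<in>E0. f e) + f {v, w1} + f {v, w2}"
    by (simp add: add.assoc)
  have "(\<Sum>e\<in>rerouted_edges E m v w1 w2 p. f e) = (\<Sum>e\<in>E0. f e) + (\<Sum>e\<in>new. f e)"
    unfolding rerouted_edges_def E0_def new_def Un_assoc
    using \<open>finite E\<close> p by (intro sum.union_disjoint) auto
  also have "(\<Sum>e\<in>new. f e) = f {p, w1} + f {p, w2} + (if m v w1 + m v w2 = 0 then 0 else f {v, p})"
    unfolding new_def using \<open>w1 \<noteq> w2\<close> \<open>p \<noteq> v\<close> \<open>v \<noteq> w1\<close> \<open>v \<noteq> w2\<close>
    by (auto simp: doubleton_eq_iff add.assoc)
  finally show ?thesis
    unfolding old by (simp add: ac_simps)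
qed

lemma flow_rerouting_basics:
  assumes flow: "is_flow \<mu>p \<mu>m V E m" and E: "{v, w1} \<in> E" "{v, w2} \<in> E" and "p \<notin> V"
  shows "v \<noteq> w1" "v \<noteq> w2" "p \<notin> {v, w1, w2}" "p \<notin> \<Union>E" "finite E"
  using flow_edge_neq[OF flow E(1)] flow_edge_neq[OF flow E(2)] flow_edge_subset[OF flow] E \<open>p \<notin> V\<close> flow
  by (auto simp: is_flow_def)

lemma flow_rerouted_flux_old_edge:
  assumes flow: "is_flow \<mu>p \<mu>m V E m" and "p \<notin> V" and "e \<in> E"
  shows "edge_measure (rerouted_flux m v w1 w2 p) e = edge_measure m e"
    and "edge_cost c (rerouted_flux m v w1 w2 p) e = edge_cost c m e"
proof -
  obtain x y where "x \<in> V" "y \<in> V" "x \<noteq> y" "e = {x, y}"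
    using flow \<open>e \<in> E\<close> by (elim flow_edgeE)
  with \<open>p \<notin> V\<close> show "edge_measure (rerouted_flux m v w1 w2 p) e = edge_measure m e"
    and "edge_cost c (rerouted_flux m v w1 w2 p) e = edge_cost c m e"
    by (metis edge_measure_cong edge_cost_cong rerouted_flux_away)+
qed

lemma sum_edge_measure_rerouted:
  assumes flow: "is_flow \<mu>p \<mu>m V E m" and E: "{v, w1} \<in> E" "{v, w2} \<in> E"
    and "w1 \<noteq> w2" and "p \<notin> V"
  shows "(\<Sum>e\<in>rerouted_edges E m v w1 w2 p. edge_measure (rerouted_flux m v w1 w2 p) e z)
       = (\<Sum>e\<in>E. edge_measure m e z)"
proof -
  let ?m' = "rerouted_flux m v w1 w2 p"
  note basic = flow_rerouting_basics[OF flow E \<open>p \<notin> V\<close>]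
  note m' = rerouted_flux_at[OF basic(3,1,2) \<open>w1 \<noteq> w2\<close>, where m = m]
  have "(\<Sum>e\<in>rerouted_edges E m v w1 w2 p. edge_measure ?m' e z)
        + edge_measure m {v, w1} z + edge_measure m {v, w2} z
      = (\<Sum>e\<in>E. edge_measure m e z) + edge_measure ?m' {p, w1} z + edge_measure ?m' {p, w2} z
        + (if m v w1 + m v w2 = 0 then 0 else edge_measure ?m' {v, p} z)"
    using sum_rerouted_edges[OF basic(5) E \<open>w1 \<noteq> w2\<close> basic(1,2,4), of "\<lambda>e. edge_measure ?m' e z" m]
    by (simp add: flow_rerouted_flux_old_edge[OF flow \<open>p \<notin> V\<close>] E)
  moreover have "edge_measure m {v, w1} z = m v w1 * (dirac w1 z - dirac v z)"
    and "edge_measure m {v, w2} z = m v w2 * (dirac w2 z - dirac v z)"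
    and "edge_measure ?m' {p, w1} z = m v w1 * (dirac w1 z - dirac p z)"
    and "edge_measure ?m' {p, w2} z = m v w2 * (dirac w2 z - dirac p z)"
    using basic m' flow_flux(1)[OF flow E(1)] flow_flux(1)[OF flow E(2)]
    by (auto simp: edge_measure_doubleton)
  moreover have "(if m v w1 + m v w2 = 0 then 0 else edge_measure ?m' {v, p} z)
      = (m v w1 + m v w2) * (dirac p z - dirac v z)"
    using basic m' by (auto simp: edge_measure_doubleton)
  ultimately show ?thesis
    by (simp add: algebra_simps)
qed

lemma is_flow_rerouted:
  assumes flow: "is_flow \<mu>p \<mu>m V E m" and E: "{v, w1} \<in> E" "{v, w2} \<in> E"
    and "w1 \<noteq> w2" and "p \<notin> V"
  shows "is_flow \<mu>p \<mu>m (insert p V) (rerouted_edges E m v w1 w2 p) (rerouted_flux m v w1 w2 p)"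
proof -
  let ?E' = "rerouted_edges E m v w1 w2 p" and ?m' = "rerouted_flux m v w1 w2 p"
  note basic = flow_rerouting_basics[OF flow E \<open>p \<notin> V\<close>]
  note m' = rerouted_flux_at[OF basic(3,1,2) \<open>w1 \<noteq> w2\<close>, where m = m]
  have edges: "\<exists>x y. x \<in> insert p V \<and> y \<in> insert p V \<and> x \<noteq> y \<and> e = {x, y}" if "e \<in> ?E'" for e
    using that
  proof (cases rule: rerouted_edgesE)
    case 1
    with flow show ?thesis
      by (elim flow_edgeE) auto
  qed (use basic flow_edge_subset[OF flow E(1)] flow_edge_subset[OF flow E(2)] in auto)
  have flux: "?m' x y = - ?m' y x \<and> ?m' x y \<noteq> 0" if "{x, y} \<in> ?E'" for x y
    using that
  proof (cases rule: rerouted_edgesE)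
    case 1
    with flow \<open>p \<notin> V\<close> have "x \<noteq> p" "y \<noteq> p"
      by (auto dest: flow_edge_subset)
    with 1 show ?thesis
      using flow_flux[OF flow 1] by (simp add: rerouted_flux_away)
  qed (use m' flow_flux(2)[OF flow E(1)] flow_flux(2)[OF flow E(2)] in \<open>auto simp: doubleton_eq_iff\<close>)
  have "finite V" "supp (\<lambda>z. \<mu>p z - \<mu>m z) \<subseteq> V" "\<forall>z. \<mu>p z - \<mu>m z = (\<Sum>e\<in>E. edge_measure m e z)"
    using flow unfolding is_flow_def by blast+
  moreover have "finite ?E'"
    using basic(5) by (simp add: rerouted_edges_def)
  ultimately show ?thesis
    unfolding is_flow_def using edges flux sum_edge_measure_rerouted[OF flow E \<open>w1 \<noteq> w2\<close> \<open>p \<notin> V\<close>]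
    by (intro conjI allI impI ballI) (blast | simp)+
qed

lemma gilbert_rerouted:
  assumes flow: "is_flow \<mu>p \<mu>m V E m" and E: "{v, w1} \<in> E" "{v, w2} \<in> E"
    and "w1 \<noteq> w2" and "p \<notin> V" and "c 0 = 0"
  shows "gilbert c (rerouted_edges E m v w1 w2 p) (rerouted_flux m v w1 w2 p)
           + c \<bar>m v w1\<bar> * dist v w1 + c \<bar>m v w2\<bar> * dist v w2
       = gilbert c E m + c \<bar>m v w1\<bar> * dist p w1 + c \<bar>m v w2\<bar> * dist p w2
           + c \<bar>m v w1 + m v w2\<bar> * dist v p"
proof -
  note basic = flow_rerouting_basics[OF flow E \<open>p \<notin> V\<close>]
  note m' = rerouted_flux_at[OF basic(3,1,2) \<open>w1 \<noteq> w2\<close>, where m = m]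
  show ?thesis
    using sum_rerouted_edges[OF basic(5) E \<open>w1 \<noteq> w2\<close> basic(1,2,4),
        of "edge_cost c (rerouted_flux m v w1 w2 p)" m]
      basic m' flow_flux(1)[OF flow E(1)] flow_flux(1)[OF flow E(2)] \<open>c 0 = 0\<close>
    by (simp add: gilbert_eq_sum_edge_cost flow_rerouted_flux_old_edge[OF flow \<open>p \<notin> V\<close>] E
        edge_cost_doubleton split: if_splits)
qed

lemma solution_rerouting_le:
  assumes sol: "is_solution c \<mu>p \<mu>m V E m" and "c 0 = 0"
    and E: "{v, w1} \<in> E" "{v, w2} \<in> E" and "w1 \<noteq> w2" and "p \<notin> V"
  shows "c \<bar>m v w1\<bar> * dist v w1 + c \<bar>m v w2\<bar> * dist v w2
       \<le> c \<bar>m v w1\<bar> * dist p w1 + c \<bar>m v w2\<bar> * dist p w2 + c \<bar>m v w1 + m v w2\<bar> * dist v p"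
proof -
  have flow: "is_flow \<mu>p \<mu>m V E m"
    using sol by (simp add: is_solution_def)
  have "gilbert c E m \<le> gilbert c (rerouted_edges E m v w1 w2 p) (rerouted_flux m v w1 w2 p)"
    using sol is_flow_rerouted[OF flow E \<open>w1 \<noteq> w2\<close> \<open>p \<notin> V\<close>] by (auto simp: is_solution_def)
  with gilbert_rerouted[where c = c, OF flow E \<open>w1 \<noteq> w2\<close> \<open>p \<notin> V\<close> \<open>c 0 = 0\<close>] show ?thesis
    by linarith
qed

definition flux_vector :: "('a \<Rightarrow> 'a \<Rightarrow> real) \<Rightarrow> 'a \<Rightarrow> 'a \<Rightarrow> 'a::real_normed_vector" where
  "flux_vector m v w = (sqrt \<bar>m v w\<bar> / norm (w - v)) *\<^sub>R (w - v)"

lemma norm_flux_vector_square: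
  assumes "w \<noteq> v"
  shows "(norm (flux_vector m v w))\<^sup>2 = \<bar>m v w\<bar>"
  using assms by (simp add: flux_vector_def power_mult_distrib power_divide)

lemma solution_flux_vectors_inner_le:
  fixes m :: "'a::real_inner \<Rightarrow> 'a \<Rightarrow> real"
  assumes sol: "is_solution sqrt \<mu>p \<mu>m V E m"
    and E: "{v, i} \<in> E" "{v, j} \<in> E" and "i \<noteq> j"
  shows "\<bar>m v i\<bar> + \<bar>m v j\<bar> + 2 * inner (flux_vector m v i) (flux_vector m v j) \<le> \<bar>m v i + m v j\<bar>"
proof -
  have flow: "is_flow \<mu>p \<mu>m V E m"
    using sol by (simp add: is_solution_def)
  have "finite V" and "i \<noteq> v" and "j \<noteq> v"
    using flow flow_edge_neq[OF flow E(1)] flow_edge_neq[OF flow E(2)] by (auto simp: is_flow_def)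
  define C where "C = sqrt \<bar>m v i + m v j\<bar>"
  have min: "sqrt \<bar>m v i\<bar> * norm (i - v) + sqrt \<bar>m v j\<bar> * norm (j - v)
      \<le> sqrt \<bar>m v i\<bar> * norm ((i - v) - q) + sqrt \<bar>m v j\<bar> * norm ((j - v) - q) + C * norm q"
    if "q \<notin> (\<lambda>z. z - v) ` V" for q
  proof -
    have "v + q \<notin> V"
      using that by force
    from solution_rerouting_le[OF sol _ E \<open>i \<noteq> j\<close> this] show ?thesis
      by (simp add: C_def dist_norm norm_minus_commute algebra_simps)
  qed
  have "norm (flux_vector m v i + flux_vector m v j) \<le> C"
    using first_variation_norm_le[OF _ _ _ _ finite_imageI[OF \<open>finite V\<close>] min] \<open>i \<noteq> v\<close> \<open>j \<noteq> v\<close>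
    by (simp add: flux_vector_def)
  then have "(norm (flux_vector m v i + flux_vector m v j))\<^sup>2 \<le> \<bar>m v i + m v j\<bar>"
    by (metis C_def abs_ge_zero norm_ge_zero power_mono real_sqrt_pow2_iff)
  moreover have "(norm (flux_vector m v i + flux_vector m v j))\<^sup>2
      = \<bar>m v i\<bar> + \<bar>m v j\<bar> + 2 * inner (flux_vector m v i) (flux_vector m v j)"
    using norm_flux_vector_square[OF \<open>i \<noteq> v\<close>, of m] norm_flux_vector_square[OF \<open>j \<noteq> v\<close>, of m]
    by (simp add: power2_norm_eq_inner inner_add_left inner_add_right inner_commute)
  ultimately show ?thesis
    by simp
qed

lemma solution_flux_vectors_obtuse:
  fixes m :: "'a::real_inner \<Rightarrow> 'a \<Rightarrow> real"
  assumes "is_solution sqrt \<mu>p \<mu>m V E m"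
    and "{v, i} \<in> E" "{v, j} \<in> E" and "i \<noteq> j"
  shows "inner (flux_vector m v i) (flux_vector m v j) \<le> 0"
    and "m v i * m v j < 0 \<Longrightarrow> inner (flux_vector m v i) (flux_vector m v j) < 0"
  using solution_flux_vectors_inner_le[OF assms] abs_triangle_ineq[of "m v i" "m v j"]
  by (auto simp: abs_if mult_less_0_iff split: if_splits)

theorem proposition1:
  fixes \<mu>p \<mu>m :: "real ^ 'n \<Rightarrow> real"
    and V :: "(real ^ 'n) set" and E :: "(real ^ 'n) set set"
    and m :: "real ^ 'n \<Rightarrow> real ^ 'n \<Rightarrow> real" and v :: "real ^ 'n"
  assumes "CARD('n) \<ge> 2"
    and "fin_supp_measure \<mu>p" and "fin_supp_measure \<mu>m"
    and "total_mass \<mu>p = total_mass \<mu>m"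
    and "is_solution sqrt \<mu>p \<mu>m V E m"
    and "branching_point \<mu>p \<mu>m V v"
  shows "degree E v \<le> CARD('n) + 1"
proof -
  note sol = \<open>is_solution sqrt \<mu>p \<mu>m V E m\<close>
  have flow: "is_flow \<mu>p \<mu>m V E m"
    using sol by (simp add: is_solution_def)
  define N where "N = neighbours E v"
  have "\<mu>p v = \<mu>m v"
    using \<open>branching_point \<mu>p \<mu>m V v\<close> by (simp add: branching_point_def supp_def)
  note signs = balanced_vertex_flux_signs[OF flow this, folded N_def]
  have "card N \<le> DIM(real ^ 'n) + 1" if ne: "N \<noteq> {}"
  proof (rule card_obtuse_family_le[where pos = "\<lambda>w. m v w > 0"])
    show "inner (flux_vector m v i) (flux_vector m v j) \<le> 0" if "i \<in> N" "j \<in> N" "i \<noteq> j" for i j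
      using solution_flux_vectors_obtuse(1)[OF sol _ _ \<open>i \<noteq> j\<close>] that by (simp add: N_def neighbours_def)
    show "inner (flux_vector m v i) (flux_vector m v j) < 0"
      if "i \<in> N" "j \<in> N" "m v i > 0" "\<not> m v j > 0" for i j
      using solution_flux_vectors_obtuse(2)[OF sol, where v = v and i = i and j = j] flow_flux(2)[OF flow, of v j] that
      by (force simp: N_def neighbours_def mult_pos_neg)
    show "finite N"
      unfolding N_def using flow by (rule finite_neighbours)
    show "\<exists>i\<in>N. m v i > 0"
      using signs(1)[OF ne] .
    show "\<exists>j\<in>N. \<not> m v j > 0"
      using signs(2)[OF ne] by force
  qed
  then show ?thesis
    using degree_eq_card_neighbours[OF flow, of v] by (cases "N = {}") (simp_all add: N_def)
qed

end
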